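(* Let $n\geq 0$ be an integer, $r\in\mathbf{N}$ (so $r\geq 1$) and $k\in\mathbf{Z}$. Then \begin{align*} \tilde{A}_{n}^{(r,k)}(x)=\sum_{j=0}^{n}\Bigg\{\sum_{l=0}^{n-j}\sum_{a=0}^{n-j-l}\sum_{a_{1}+\cdots+a_{r}=a}\binom{n}{l+j}\binom{n-j-l}{a}\binom{a}{a_{1},\ldots,a_{r}} S_{1}(l+j,j)\left(\prod_{i=1}^{r}B_{a_{i}}^{(a_{i})}\right)\tilde{C}_{n-j-l-a}^{(k)}\Bigg\}x^{j}, \end{align*} where the inner sum runs over all $r$-tuples of nonnegative integers $(a_1,\ldots,a_r)$ with sum $a$.
   Context: For $k\in\mathbf{Z}$, $Lif_{k}(x)=\sum_{m=0}^{\infty}\frac{x^{m}}{m!(m+1)^{k}}$. For integers $r\geq 0$, $k\in\mathbf{Z}$, the polynomials $\tilde{A}_{n}^{(r,k)}(x)$ are defined by \[\left(\frac{t}{(1+t)\log(1+t)}\right)^{r}Lif_{k}\left(-\log(1+t)\right)(1+t)^{x}=\sum_{n=0}^{\infty}\tilde{A}_{n}^{(r,k)}(x)\frac{t^{n}}{n!}.\] The poly-Cauchy numbers of the second kind $\tilde{C}_{n}^{(k)}$ are defined by $Lif_{k}\left(-\log(1+t)\right)=\sum_{n=0}^{\infty}\tilde{C}_{n}^{(k)}\frac{t^{n}}{n!}$. For an integer $\alpha\geq 0$, the Bernoulli numbers of order $\alpha$ are defined by $\left(\frac{t}{e^{t}-1}\right)^{\alpha}=\sum_{n=0}^{\infty}B_{n}^{(\alpha)}\frac{t^{n}}{n!}$.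 $S_{1}(n,m)$ denotes the signed Stirling numbers of the first kind, defined by $x(x-1)\cdots(x-n+1)=\sum_{m=0}^{n}S_{1}(n,m)x^{m}$; $\binom{a}{a_1,\ldots,a_r}$ is the multinomial coefficient. *)

theory Defs
  imports "HOL-Computational_Algebra.Computational_Algebra"
begin

definition Lif_fps :: "int \<Rightarrow> real fps" where
  "Lif_fps k = Abs_fps (\<lambda>m. 1 / (fact m * (real m + 1) powi k))"

text \<open>log(1+t) is fps_ln 1; the series Lif_k(-log(1+t)).\<close>
definition LifC_fps :: "int \<Rightarrow> real fps" where
  "LifC_fps k = Lif_fps k oo (- fps_ln 1)"

definition polyCauchy2 :: "int \<Rightarrow> nat \<Rightarrow> real" where
  "polyCauchy2 k n = fact n * (LifC_fps k $ n)"

text \<open>t/((1+t) log(1+t)) = inverse((1+t) * (log(1+t)/t)).\<close>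
definition tlog_fps :: "real fps" where
  "tlog_fps = inverse ((1 + fps_X) * fps_shift 1 (fps_ln 1))"

text \<open>Generating function of the polynomials A~_n^{(r,k)}(x); (1+t)^x = fps_binomial x.\<close>
definition Atilde :: "nat \<Rightarrow> int \<Rightarrow> nat \<Rightarrow> real \<Rightarrow> real" where
  "Atilde r k n x = fact n * ((tlog_fps ^ r * LifC_fps k * fps_binomial x) $ n)"

text \<open>Bernoulli numbers of order alpha: (t/(e^t-1))^alpha.\<close>
definition bernoulli_ord :: "nat \<Rightarrow> nat \<Rightarrow> real" where
  "bernoulli_ord \<alpha> n = fact n * ((inverse (fps_shift 1 (fps_exp 1 - 1)) ^ \<alpha>) $ n)"

definition S1 :: "nat \<Rightarrow> nat \<Rightarrow> int" where
  "S1 n m = coeff (\<Prod>i<n. [:- of_nat i, 1:]) m"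

definition multinom :: "nat \<Rightarrow> nat \<Rightarrow> (nat \<Rightarrow> nat) \<Rightarrow> real" where
  "multinom a r f = fact a / (\<Prod>i=1..r. fact (f i))"

end

theory Submission
  imports Defs
begin

text \<open>
  Read off the coefficient of t^n in the product of (1+t)^x, (t/((1+t) log(1+t)))^r and
  Lif_k(-log(1+t)) as a triple Cauchy product. The coefficients of (1+t)^x are falling factorials
  divided by factorials, hence Stirling numbers of the first kind, and those of the last factor are
  poly-Cauchy numbers. The essential input is Norlund's identity
  [t^n] t/((1+t) log(1+t)) = B_n^(n) / n!: the substitution t = e^s - 1 turns
  t/((1+t) log(1+t)) dt into (e^s - 1)/s ds, and the Lagrange change of variables
  [t^n] H(t) = [s^n] H(u(s)) u'(s) (s/u(s))^(n+1) then yields [s^n] (s/(e^s - 1))^n.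
  The r-th power of a series is a sum over weak compositions into r parts, which supplies the
  multinomial coefficients.
\<close>

definition weak_compositions :: "'a set \<Rightarrow> nat \<Rightarrow> ('a \<Rightarrow> nat) set" where
  "weak_compositions I m = {f \<in> I \<rightarrow>\<^sub>E {0..m}. sum f I = m}"

lemma bij_betw_multisets_of_size_weak_compositions:
  assumes "finite I"
  shows "bij_betw (\<lambda>X. restrict (count X) I) (multisets_of_size I m) (weak_compositions I m)"
proof (rule bij_betw_byWitness[where f' = "\<lambda>g. \<Sum>i\<in>I. replicate_mset (g i) i"])
  have count_replicates: "count (\<Sum>i\<in>I. replicate_mset (g i) i) x = (if x \<in> I then g x else 0)" for g x
    using assms by (simp add: count_sum)
  have size_eq: "size X = (\<Sum>i\<in>I. count X i)" if "set_mset X \<subseteq> I" for X :: "'a multiset"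
  proof -
    have "size X = (\<Sum>i\<in>set_mset X. count X i)" by (rule size_multiset_overloaded_eq)
    also have "\<dots> = (\<Sum>i\<in>I. count X i)"
      using that assms by (intro sum.mono_neutral_left) (auto simp: count_eq_zero_iff)
    finally show ?thesis .
  qed
  show "\<forall>X\<in>multisets_of_size I m. (\<Sum>i\<in>I. replicate_mset (restrict (count X) I i) i) = X"
    by (auto simp: multisets_of_size_def multiset_eq_iff count_replicates count_eq_zero_iff)
  show "\<forall>g\<in>weak_compositions I m. restrict (count (\<Sum>i\<in>I. replicate_mset (g i) i)) I = g"
    by (auto simp: weak_compositions_def count_replicates fun_eq_iff PiE_iff extensional_def)
  show "(\<lambda>X. restrict (count X) I) ` multisets_of_size I m \<subseteq> weak_compositions I m"
    using size_eq assms by (auto simp: multisets_of_size_def weak_compositions_def intro: member_le_sum)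
  show "(\<lambda>g. \<Sum>i\<in>I. replicate_mset (g i) i) ` weak_compositions I m \<subseteq> multisets_of_size I m"
    by (auto simp: multisets_of_size_def weak_compositions_def count_replicates
        simp flip: count_greater_zero_iff split: if_splits)
qed

lemma fps_prod_nth_weak_compositions:
  fixes f :: "'i \<Rightarrow> 'a::comm_semiring_1 fps"
  assumes "finite I"
  shows "(\<Prod>i\<in>I. f i) $ m = (\<Sum>g\<in>weak_compositions I m. \<Prod>i\<in>I. f i $ g i)"
proof -
  have "(\<Prod>i\<in>I. f i) $ m = (\<Sum>X\<in>multisets_of_size I m. \<Prod>i\<in>I. f i $ restrict (count X) I i)"
    using assms by (simp add: fps_prod_nth')
  also have "\<dots> = (\<Sum>g\<in>weak_compositions I m. \<Prod>i\<in>I. f i $ g i)"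
    using bij_betw_multisets_of_size_weak_compositions[OF assms]
    by (rule sum.reindex_bij_betw)
  finally show ?thesis .
qed

lemma fps_power_nth_weak_compositions:
  fixes a :: "'a::comm_semiring_1 fps"
  shows "(a ^ r) $ m = (\<Sum>g\<in>weak_compositions {1..r} m. \<Prod>i=1..r. a $ g i)"
  using fps_prod_nth_weak_compositions[of "{1..r}" "\<lambda>_. a" m] by simp

text \<open>With u = E X this is the residue of u' u^(-k-1), which vanishes for k > 0 because
  u' u^(-k-1) = -(u^(-k))' / k there.\<close>

lemma fps_nth_deriv_times_inverse_power:
  fixes E :: "'a::field_char_0 fps"
  assumes E0: "E $ 0 = 1"
  shows "((E + fps_X * fps_deriv E) * inverse E ^ (k + 1)) $ k = (if k = 0 then 1 else 0)"
proof (cases k)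
  case 0
  then show ?thesis using E0 by simp
next
  case (Suc m)
  define F where "F = inverse E"
  have EF: "E * F = 1" using E0 unfolding F_def by (simp add: inverse_mult_eq_1')
  have dF: "fps_deriv F = - fps_deriv E * F^2" unfolding F_def using E0 by (simp add: fps_inverse_deriv)
  have eq: "(E + fps_X * fps_deriv E) * F ^ (k + 1) = F ^ k - fps_X * (fps_deriv F * F ^ m)"
    using EF dF by (simp add: Suc algebra_simps power2_eq_square)
  have "of_nat k * (fps_deriv F * F ^ m) $ m = fps_deriv (F ^ k) $ m"
    by (simp add: fps_deriv_power mult.assoc Suc del: power_Suc of_nat_Suc)
  also have "\<dots> = of_nat k * (F ^ k) $ k"
    by (simp only: fps_deriv_nth Suc) (simp del: power_Suc)
  finally have "(fps_deriv F * F ^ m) $ m = (F ^ k) $ k" using Suc by (simp del: of_nat_Suc)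
  then show ?thesis unfolding F_def[symmetric] eq using Suc by simp
qed

lemma fps_compose_nth_extend:
  assumes "b $ 0 = 0" "j \<le> n"
  shows "(H oo b) $ j = (\<Sum>i=0..n. H $ i * (b ^ i) $ j)"
  unfolding fps_compose_nth
  using assms startsby_zero_power_prefix[of b] by (intro sum.mono_neutral_left) auto

lemma fps_nth_compose_change_of_variables:
  fixes E H :: "'a::field_char_0 fps"
  assumes E0: "E $ 0 = 1"
  shows "((H oo (E * fps_X)) * fps_deriv (E * fps_X) * inverse E ^ (n + 1)) $ n = H $ n"
proof -
  define u where "u = E * fps_X"
  define W where "W = fps_deriv u * inverse E ^ (n + 1)"
  have u0: "u $ 0 = 0" unfolding u_def by simp
  have du: "fps_deriv u = E + fps_X * fps_deriv E" unfolding u_def by (simp add: algebra_simps)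
  have EI: "E ^ i * inverse E ^ i = 1" for i
    using E0 by (simp flip: power_mult_distrib add: inverse_mult_eq_1')
  have uW: "(u ^ i * W) $ n = (if i = n then 1 else 0)" if "i \<le> n" for i
  proof -
    define k where "k = n - i"
    have "u ^ i * W = fps_X ^ i * ((E + fps_X * fps_deriv E) * inverse E ^ (k + 1)) * (E ^ i * inverse E ^ i)"
      using that unfolding u_def W_def du k_def
      by (simp add: power_mult_distrib algebra_simps flip: power_add)
    then have "(u ^ i * W) $ n = ((E + fps_X * fps_deriv E) * inverse E ^ (k + 1)) $ k"
      using that EI by (simp add: fps_X_power_mult_nth k_def)
    then show ?thesis
      using that fps_nth_deriv_times_inverse_power[OF E0, of k] by (auto simp: k_def)
  qed
  have "((H oo u) * W) $ n = (\<Sum>j=0..n. \<Sum>i=0..n. H $ i * ((u ^ i) $ j * W $ (n - j)))"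
    by (simp add: fps_mult_nth fps_compose_nth_extend[OF u0] sum_distrib_right mult.assoc)
  also have "\<dots> = (\<Sum>i=0..n. H $ i * (u ^ i * W) $ n)"
    by (subst sum.swap) (simp add: fps_mult_nth sum_distrib_left)
  also have "\<dots> = H $ n"
    by (simp add: uW if_distrib cong: if_cong)
  finally show ?thesis unfolding W_def u_def by (simp add: mult.assoc)
qed

lemma tlog_fps_compose_exp:
  "(tlog_fps oo (fps_exp 1 - 1)) * fps_exp 1 = fps_shift 1 (fps_exp (1::real) - 1)"
proof -
  define u :: "real fps" where "u = fps_exp 1 - 1"
  define E where "E = fps_shift 1 u"
  define L :: "real fps" where "L = fps_shift 1 (fps_ln 1)"
  have u0: "u $ 0 = 0" and u1: "u $ 1 = 1" unfolding u_def by simp_all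
  have uE: "u = E * fps_X" unfolding E_def u_def by (intro fps_ext) auto
  have lnX: "fps_ln 1 = L * fps_X" unfolding L_def by (intro fps_ext) auto
  have "fps_ln 1 oo u = fps_X"
    using fps_ln_fps_exp_inv[of "1::real"] fps_inv[of u] u0 u1 unfolding u_def by simp
  then have "((L oo u) * E) * fps_X = 1 * fps_X"
    using u0 unfolding lnX by (simp add: fps_compose_mult_distrib uE mult.assoc)
  then have LE: "(L oo u) * E = 1"
    by (metis fps_shift_times_fps_X')
  have L0: "L $ 0 = 1" unfolding L_def by (simp add: fps_ln_nth)
  have "tlog_fps oo u = inverse (((1 + fps_X) * L) oo u)"
    unfolding tlog_fps_def L_def[symmetric] using u0 L0 by (intro fps_inverse_compose) auto
  also have "((1 + fps_X) * L) oo u = fps_exp 1 * (L oo u)"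
    using u0 by (simp add: fps_compose_mult_distrib fps_compose_add_distrib u_def)
  also have "inverse \<dots> = inverse (fps_exp 1) * E"
    unfolding fps_inverse_mult using fps_inverse_unique[OF LE] by simp
  finally have "(tlog_fps oo u) * fps_exp 1 = E * (inverse (fps_exp 1) * fps_exp 1)"
    by (simp add: algebra_simps)
  then show ?thesis
    unfolding u_def E_def by (simp add: inverse_mult_eq_1)
qed

lemma tlog_fps_nth: "tlog_fps $ n = bernoulli_ord n n / fact n"
proof -
  define E :: "real fps" where "E = fps_shift 1 (fps_exp 1 - 1)"
  have E0: "E $ 0 = 1" unfolding E_def by simp
  have uE: "E * fps_X = fps_exp 1 - 1" unfolding E_def by (intro fps_ext) auto
  have "tlog_fps $ n = ((tlog_fps oo (fps_exp 1 - 1)) * fps_exp 1 * inverse E ^ (n + 1)) $ n"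
    using fps_nth_compose_change_of_variables[OF E0, of tlog_fps n] unfolding uE by simp
  also have "\<dots> = (inverse E ^ n * (E * inverse E)) $ n"
    unfolding tlog_fps_compose_exp E_def[symmetric] by (simp add: algebra_simps)
  also have "\<dots> = (inverse E ^ n) $ n"
    using E0 by (simp add: inverse_mult_eq_1')
  finally show ?thesis unfolding bernoulli_ord_def E_def by simp
qed

lemma map_poly_of_int_mult:
  "map_poly of_int (p * q) = (map_poly of_int p * map_poly of_int q :: 'a::comm_ring_1 poly)"
  by (intro poly_eqI) (simp add: coeff_map_poly coeff_mult)

lemma falling_product_eq_sum_S1:
  "(\<Prod>i<n. x - of_nat i) = (\<Sum>j=0..n. of_int (S1 n j) * (x::'a::comm_ring_1) ^ j)"
proof -
  define p :: "'a poly" where "p = (\<Prod>i<n. [:- of_nat i, 1:])"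
  have map_p: "map_poly of_int (\<Prod>i<m. [:- of_nat i, 1:]) = (\<Prod>i<m. [:- of_nat i, 1:] :: 'a poly)" for m
  proof (induction m)
    case (Suc m)
    then show ?case by (simp only: prod.lessThan_Suc map_poly_of_int_mult) (simp add: map_poly_pCons)
  qed simp
  have deg: "degree p \<le> n"
    unfolding p_def using degree_prod_sum_le[of "{..<n}" "\<lambda>i. [:- of_nat i :: 'a, 1:]"] by (simp add: o_def)
  have "(\<Prod>i<n. x - of_nat i) = poly p x" unfolding p_def by (simp add: poly_prod)
  also have "\<dots> = (\<Sum>j\<le>n. coeff p j * x ^ j)"
    unfolding poly_altdef using deg by (intro sum.mono_neutral_left) (auto simp: coeff_eq_0)
  also have "\<dots> = (\<Sum>j=0..n. of_int (S1 n j) * x ^ j)"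
    unfolding S1_def p_def map_p[symmetric] by (simp add: coeff_map_poly atLeast0AtMost)
  finally show ?thesis .
qed

lemma fps_binomial_nth_S1:
  "fps_binomial x $ n = (\<Sum>j=0..n. of_int (S1 n j) * x ^ j) / fact n"
  by (simp add: gbinomial_prod_rev falling_product_eq_sum_S1[symmetric] atLeast0LessThan)

lemma tlog_fps_power_nth:
  "(tlog_fps ^ r) $ a =
     (\<Sum>f\<in>weak_compositions {1..r} a. multinom a r f * (\<Prod>i=1..r. bernoulli_ord (f i) (f i))) / fact a"
  by (simp add: fps_power_nth_weak_compositions tlog_fps_nth multinom_def prod_dividef sum_divide_distrib)

lemma fps_mult3_nth:
  fixes A B C :: "'a::comm_semiring_1 fps"
  shows "(A * B * C) $ n = (\<Sum>i=0..n. \<Sum>j=0..n-i. A $ i * B $ j * C $ (n - i - j))"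
  by (simp add: mult.assoc fps_mult_nth sum_distrib_left mult_ac)

lemma sum_triangle_reindex:
  fixes g :: "nat \<Rightarrow> nat \<Rightarrow> 'a::comm_monoid_add"
  shows "(\<Sum>m=0..n. \<Sum>j=0..m. g j m) = (\<Sum>j=0..n. \<Sum>l=0..n-j. g j (l + j))"
proof -
  have "(\<Sum>m=0..n. \<Sum>j=0..m. g j m) = (\<Sum>(j, l)\<in>{(j, l). j + l \<le> n}. g j (l + j))"
    using sum.triangle_reindex_eq[of "\<lambda>j l. g j (l + j)" n] by (simp add: atLeast0AtMost)
  also have "{(j, l). j + l \<le> n} = Sigma {0..n} (\<lambda>j. {0..n-j})" by auto
  finally show ?thesis by (simp add: sum.Sigma)
qed

lemma fact_div_trinomial:
  assumes "i + j \<le> n"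
  shows "fact n / (fact i * fact j * fact (n - i - j)) = (real (n choose i) * real (n - i choose j) :: real)"
  using assms by (simp add: binomial_fact diff_diff_left)

lemma Atilde_coefficient_term:
  assumes "m + a \<le> n"
  shows "fact n * (fps_binomial x $ m * (tlog_fps ^ r) $ a * LifC_fps k $ (n - m - a)) =
    (\<Sum>j=0..m. (\<Sum>f\<in>weak_compositions {1..r} a.
        real (n choose m) * real (n - m choose a) * multinom a r f * real_of_int (S1 m j)
        * (\<Prod>i=1..r. bernoulli_ord (f i) (f i)) * polyCauchy2 k (n - m - a)) * x ^ j)" (is "_ = ?rhs")
proof -
  have "fact n * (fps_binomial x $ m * (tlog_fps ^ r) $ a * LifC_fps k $ (n - m - a)) =
      fact n / (fact m * fact a * fact (n - m - a))
      * (\<Sum>j=0..m. real_of_int (S1 m j) * x ^ j)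
      * (\<Sum>f\<in>weak_compositions {1..r} a. multinom a r f * (\<Prod>i=1..r. bernoulli_ord (f i) (f i)))
      * polyCauchy2 k (n - m - a)"
    by (simp add: fps_binomial_nth_S1 tlog_fps_power_nth polyCauchy2_def del: fps_binomial_nth)
  also have "\<dots> = ?rhs"
    unfolding fact_div_trinomial[OF assms]
    by (simp add: sum_distrib_left sum_distrib_right mult_ac)
  finally show ?thesis .
qed

theorem corollary4:
  fixes n r :: nat and k :: int and x :: real
  assumes "r \<ge> 1"
  shows "Atilde r k n x =
    (\<Sum>j=0..n. (\<Sum>l=0..n-j. \<Sum>a=0..n-j-l.
        \<Sum>f\<in>{f \<in> {1..r} \<rightarrow>\<^sub>E {0..a}. (\<Sum>i=1..r. f i) = a}.
          real (n choose (l+j)) * real (n-j-l choose a) * multinom a r f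
          * real_of_int (S1 (l+j) j)
          * (\<Prod>i=1..r. bernoulli_ord (f i) (f i))
          * polyCauchy2 k (n-j-l-a)) * x ^ j)"
proof -
  define T where "T j m a f = real (n choose m) * real (n - m choose a) * multinom a r f
      * real_of_int (S1 m j) * (\<Prod>i=1..r. bernoulli_ord (f i) (f i)) * polyCauchy2 k (n - m - a)"
    for j m a f
  have "Atilde r k n x = fact n * ((fps_binomial x * tlog_fps ^ r * LifC_fps k) $ n)"
    unfolding Atilde_def by (simp add: mult_ac)
  also have "\<dots> = (\<Sum>m=0..n. \<Sum>a=0..n-m. \<Sum>j=0..m.
      (\<Sum>f\<in>weak_compositions {1..r} a. T j m a f) * x ^ j)"
    unfolding fps_mult3_nth sum_distrib_left T_def
    by (intro sum.cong refl Atilde_coefficient_term) auto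
  also have "\<dots> = (\<Sum>m=0..n. \<Sum>j=0..m. (\<Sum>a=0..n-m. \<Sum>f\<in>weak_compositions {1..r} a. T j m a f) * x ^ j)"
    by (simp add: sum.swap[of _ "{0..n-_}"] sum_distrib_right)
  also have "\<dots> = (\<Sum>j=0..n. \<Sum>l=0..n-j. (\<Sum>a=0..n-(l+j). \<Sum>f\<in>weak_compositions {1..r} a. T j (l+j) a f) * x ^ j)"
    by (rule sum_triangle_reindex)
  finally show ?thesis
    unfolding T_def weak_compositions_def by (simp add: diff_diff_left add.commute sum_distrib_right)
qed

end
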